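(* Let $S_j$, $j\in\mathbb{Z}^d$, be local potentials satisfying (A)–(E). Let $(p_1,q_1),\dots,(p_d,q_d)\in\mathbb{Z}^d\times\mathbb{Z}$ be such that $p_1,\dots,p_d$ are linearly independent. Then the periodic action $W_{p,q}:\mathbb{X}_{p,q}\to\mathbb{R}$ attains its minimum on $\mathbb{X}_{p,q}$.
   Context: Notation: $\|i\|=\sum_{k=1}^d|i_k|$ for $i\in\mathbb{Z}^d$, $B_j^r=\{k\in\mathbb{Z}^d:\|k-j\|\le r\}$, and $(\tau_{k,l}x)_i=x_{i+k}+l$ for $(k,l)\in\mathbb{Z}^d\times\mathbb{Z}$, $x\in\mathbb{R}^{\mathbb{Z}^d}$. Local potentials are functions $S_j:\mathbb{R}^{\mathbb{Z}^d}\to\mathbb{R}$, $j\in\mathbb{Z}^d$, with: (A) there is $r\in(0,\infty)$ and $C^2$ functions $s_j:\mathbb{R}^{B_j^r}\to\mathbb{R}$ with $S_j(x)=s_j(x|_{B_j^r})$ (partial derivatives $\partial_{i_1\dots i_m}S_j$ are those of $s_j$, and zero if some index lies outside $B_j^r$); (B) $S_j(\tau_{k,l}x)=S_{j+k}(x)$ for all $j,k,l$; (C) each $S_j$ is bounded below and $S_j(x)\to\infty$ as $|x_k-x_j|\to\infty$ for every $k$ with $\|k-j\|=1$; (D) $\partial_{i,k}S_j\le 0$ for all $j$ and $i\ne k$, and $\partial_{i,k}S_i<0$ whenever $\|i-k\|=1$; (E) there is $C$ with $|\partial_{i,k}S_j|\le C$ for all $i,j,k$. Let $p$ denote the $d\times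 d$ integer matrix with columns $p_1,\dots,p_d$, $B_p=p([0,1)^d)\cap\mathbb{Z}^d$, $\mathbb{X}_{p,q}=\{x\in\mathbb{R}^{\mathbb{Z}^d}:\tau_{p_j,q_j}x=x,\ j=1,\dots,d\}$, and $W_{p,q}(x)=\sum_{j\in B_p}S_j(x)$ for $x\in\mathbb{X}_{p,q}$. A minimizer of $W_{p,q}$ on $\mathbb{X}_{p,q}$ is called a $p,q$-minimizer. *)

theory Defs
  imports "HOL-Analysis.Analysis"
begin

text \<open>Lattice points of Z^d are modelled as int^'d with 'd a finite index type
(d = CARD('d)); configurations x in R^(Z^d) are functions int^'d => real.\<close>

definition l1norm :: "int^'d \<Rightarrow> int" where
  "l1norm i = (\<Sum>k\<in>UNIV. \<bar>i $ k\<bar>)"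

definition ball1 :: "int^'d \<Rightarrow> real \<Rightarrow> (int^'d) set" where
  "ball1 j r = {k. real_of_int (l1norm (k - j)) \<le> r}"

definition tau :: "int^'d \<Rightarrow> int \<Rightarrow> (int^'d \<Rightarrow> real) \<Rightarrow> (int^'d \<Rightarrow> real)" where
  "tau k l x = (\<lambda>i. x (i + k) + real_of_int l)"

definition pd1 :: "(('i \<Rightarrow> real) \<Rightarrow> real) \<Rightarrow> 'i \<Rightarrow> ('i \<Rightarrow> real) \<Rightarrow> real" where
  "pd1 f i x = deriv (\<lambda>t. f (x(i := t))) (x i)"

definition pd2 :: "(('i \<Rightarrow> real) \<Rightarrow> real) \<Rightarrow> 'i \<Rightarrow> 'i \<Rightarrow> ('i \<Rightarrow> real) \<Rightarrow> real" where
  "pd2 f i k x = pd1 (\<lambda>y. pd1 f k y) i x"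

text \<open>For a function depending only on finitely many coordinates this is exactly C^2
of the induced function of finitely many variables.\<close>
definition C2 :: "(('i \<Rightarrow> real) \<Rightarrow> real) \<Rightarrow> bool" where
  "C2 f \<longleftrightarrow>
     (\<forall>i x. (\<lambda>t. f (x(i := t))) differentiable (at (x i))) \<and>
     (\<forall>i. continuous_on UNIV (pd1 f i)) \<and>
     (\<forall>i k x. (\<lambda>t. pd1 f k (x(i := t))) differentiable (at (x i))) \<and>
     (\<forall>i k. continuous_on UNIV (pd2 f i k))"

definition local_potentials :: "(int^'d \<Rightarrow> (int^'d \<Rightarrow> real) \<Rightarrow> real) \<Rightarrow> bool" where
  "local_potentials S \<longleftrightarrow>
    \<comment> \<open>(A)\<close>
    (\<exists>r>0. (\<forall>j x y. (\<forall>k\<in>ball1 j r. x k = y k) \<longrightarrow> S j x = S j y) \<and> (\<forall>j. C2 (S j))) \<and>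
    \<comment> \<open>(B)\<close>
    (\<forall>j k l x. S j (tau k l x) = S (j + k) x) \<and>
    \<comment> \<open>(C)\<close>
    (\<forall>j. bdd_below (range (S j))) \<and>
    (\<forall>j k. l1norm (k - j) = 1 \<longrightarrow>
        (\<forall>M. \<exists>R. \<forall>x. \<bar>x k - x j\<bar> > R \<longrightarrow> S j x > M)) \<and>
    \<comment> \<open>(D)\<close>
    (\<forall>j i k x. i \<noteq> k \<longrightarrow> pd2 (S j) i k x \<le> 0) \<and>
    (\<forall>i k x. l1norm (i - k) = 1 \<longrightarrow> pd2 (S i) i k x < 0) \<and>
    \<comment> \<open>(E)\<close>
    (\<exists>C. \<forall>i j k x. \<bar>pd2 (S j) i k x\<bar> \<le> C)"

text \<open>p is given by its columns p j :: int^'d, j ranging over the index type 'd.\<close>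
definition lin_indep_cols :: "('d \<Rightarrow> int^'d) \<Rightarrow> bool" where
  "lin_indep_cols p \<longleftrightarrow>
     (\<forall>c::'d \<Rightarrow> real. (\<Sum>j\<in>UNIV. c j *\<^sub>R (\<chi> i. real_of_int (p j $ i))) = 0 \<longrightarrow> (\<forall>j. c j = 0))"

definition Bp :: "('d \<Rightarrow> int^'d) \<Rightarrow> (int^'d) set" where
  "Bp p = {m. \<exists>t::'d \<Rightarrow> real. (\<forall>j. 0 \<le> t j \<and> t j < 1) \<and>
              (\<forall>i. real_of_int (m $ i) = (\<Sum>j\<in>UNIV. t j * real_of_int (p j $ i)))}"

definition Xpq :: "('d \<Rightarrow> int^'d) \<Rightarrow> ('d \<Rightarrow> int) \<Rightarrow> (int^'d \<Rightarrow> real) set" where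
  "Xpq p q = {x. \<forall>j. tau (p j) (q j) x = x}"

definition Wpq :: "(int^'d \<Rightarrow> (int^'d \<Rightarrow> real) \<Rightarrow> real) \<Rightarrow> ('d \<Rightarrow> int^'d) \<Rightarrow>
                   (int^'d \<Rightarrow> real) \<Rightarrow> real" where
  "Wpq S p x = (\<Sum>j\<in>Bp p. S j x)"

end

theory Submission
  imports Defs
begin

text \<open>
  The periodic action W = Wpq S p is invariant under adding an integer constant
  to a configuration, so it suffices to minimise over configurations x in Xpq p q
  with 0 \<le> x 0 \<le> 1.  Fix one periodic configuration x0 (it exists because the
  periods p j are linearly independent) and put M = W x0.  Since every S j is
  bounded below and every lattice site is a translate of a site in the
  fundamental domain Bp p, each single potential S j is bounded on the sublevel
  set {W \<le> M}; by coercivity (C) neighbouring values then differ by at most a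
  uniform constant, hence |x i| \<le> 1 + R * l1norm i there.  The normalised
  sublevel set is thus a closed subset of a product of compact intervals, i.e.
  compact in the product topology, and W is continuous on such boxes because it
  is a finite sum of C^2 functions of finitely many variables.  A minimiser of W
  on this compact set is a global p,q-minimizer.

  Only (A)-(C) are
  used.
\<close>

section \<open>Boxes in configuration space\<close>

definition config_box :: "('i \<Rightarrow> real) \<Rightarrow> ('i \<Rightarrow> real) set" where
  "config_box c = {x. \<forall>i. \<bar>x i\<bar> \<le> c i}"

text \<open>A box is a product of compact intervals, hence compact by Tychonoff.\<close>
lemma compact_config_box: "compact (config_box c)"
proof -
  have "config_box c = PiE UNIV (\<lambda>i. {-c i..c i})"
    by (auto simp: config_box_def PiE_iff abs_le_iff minus_le_iff)
  moreover have "compactin (product_topology (\<lambda>_. euclidean) UNIV) (PiE UNIV (\<lambda>i. {-c i..c i::real}))"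
    by (simp add: compactin_PiE)
  ultimately show ?thesis by (simp add: euclidean_product_topology)
qed

text \<open>A function of finitely many coordinates whose partial derivatives are
  bounded on a box is Lipschitz there w.r.t. the l1 distance of these coordinates:
  change the coordinates in F one at a time and apply the mean value bound.\<close>
lemma local_lipschitz_on_box:
  fixes f :: "('i \<Rightarrow> real) \<Rightarrow> real"
  assumes fin: "finite F"
    and dep: "\<And>x y. (\<forall>k\<in>F. x k = y k) \<Longrightarrow> f x = f y"
    and der: "\<And>a x t. DERIV (\<lambda>s. f (x(a := s))) t :> D a (x(a := t))"
    and bnd: "\<And>a z. a \<in> F \<Longrightarrow> z \<in> config_box c \<Longrightarrow> \<bar>D a z\<bar> \<le> K a"
    and y: "y \<in> config_box c" and z: "z \<in> config_box c"
  shows "\<bar>f y - f z\<bar> \<le> (\<Sum>a\<in>F. K a * \<bar>y a - z a\<bar>)"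
proof -
  have hybrid: "\<bar>f (\<lambda>k. if k \<in> G then y k else z k) - f z\<bar> \<le> (\<Sum>a\<in>G. K a * \<bar>y a - z a\<bar>)"
    if "finite G" "G \<subseteq> F" for G
    using that
  proof (induction G rule: finite_induct)
    case empty
    then show ?case by simp
  next
    case (insert a G)
    define w where "w = (\<lambda>k. if k \<in> G then y k else z k)"
    have w_box: "w(a := s) \<in> config_box c" if "\<bar>s\<bar> \<le> c a" for s
      using y z that by (auto simp: config_box_def w_def)
    have "\<bar>y a\<bar> \<le> c a" "\<bar>z a\<bar> \<le> c a"
      using y z by (auto simp: config_box_def)
    then have ya: "y a \<in> {-c a..c a}" and za: "z a \<in> {-c a..c a}"
      by (auto simp: abs_le_iff)
    have "norm (f (w(a := y a)) - f (w(a := z a))) \<le> K a * norm (y a - z a)"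
    proof (rule field_differentiable_bound[where S = "{-c a..c a}"])
      fix s assume "s \<in> {-c a..c a}"
      then have "w(a := s) \<in> config_box c" by (intro w_box) (simp add: abs_le_iff)
      then show "norm (D a (w(a := s))) \<le> K a" using bnd insert.prems by simp
      show "((\<lambda>s. f (w(a := s))) has_field_derivative D a (w(a := s))) (at s within {-c a..c a})"
        using der by (rule has_field_derivative_at_within)
    qed (use ya za in auto)
    moreover have "w(a := z a) = w" and "(\<lambda>k. if k \<in> insert a G then y k else z k) = w(a := y a)"
      using insert.hyps by (auto simp: w_def)
    moreover have "\<bar>f w - f z\<bar> \<le> (\<Sum>a\<in>G. K a * \<bar>y a - z a\<bar>)"
      using insert unfolding w_def by auto
    ultimately show ?case using insert.hyps by simp
  qed
  have "f (\<lambda>k. if k \<in> F then y k else z k) = f y" by (rule dep) auto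
  then show ?thesis using hybrid[OF fin] by simp
qed

lemma C2_DERIV_pd1:
  assumes "C2 f"
  shows "DERIV (\<lambda>s. f (x(a := s))) t :> pd1 f a (x(a := t))"
proof -
  have "(\<lambda>s. f ((x(a := t))(a := s))) differentiable (at ((x(a := t)) a))"
    using assms unfolding C2_def by blast
  then have "(\<lambda>s. f (x(a := s))) differentiable (at t)" by simp
  then show ?thesis by (simp add: pd1_def DERIV_deriv_iff_real_differentiable)
qed

text \<open>A C^2 function depending on finitely many coordinates is continuous on
  every box: its partials are continuous, hence bounded on the compact box, and
  the Lipschitz estimate above applies.\<close>
lemma continuous_on_box_local_C2:
  fixes f :: "('i \<Rightarrow> real) \<Rightarrow> real"
  assumes fin: "finite F"
    and dep: "\<And>x y. (\<forall>k\<in>F. x k = y k) \<Longrightarrow> f x = f y"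
    and c2: "C2 f"
  shows "continuous_on (config_box c) f"
proof -
  let ?Q = "config_box c"
  have "\<exists>K. \<forall>z\<in>?Q. \<bar>pd1 f a z\<bar> \<le> K" for a
  proof -
    have "continuous_on ?Q (pd1 f a)"
      using c2 unfolding C2_def by (blast intro: continuous_on_subset)
    then have "bounded (pd1 f a ` ?Q)"
      using compact_config_box compact_continuous_image compact_imp_bounded by blast
    then show ?thesis by (auto simp: bounded_real)
  qed
  then obtain K where K: "\<And>a z. z \<in> ?Q \<Longrightarrow> \<bar>pd1 f a z\<bar> \<le> K a" by metis
  have lip: "\<bar>f y - f z\<bar> \<le> (\<Sum>a\<in>F. K a * \<bar>y a - z a\<bar>)" if "y \<in> ?Q" "z \<in> ?Q" for y z
    using local_lipschitz_on_box[OF fin dep C2_DERIV_pd1[OF c2] K] that by blast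
  show ?thesis
    unfolding continuous_on_def
  proof
    fix z assume zQ: "z \<in> ?Q"
    have coord: "((\<lambda>y. y a) \<longlongrightarrow> z a) (at z within ?Q)" for a
    proof -
      have "continuous_on UNIV (\<lambda>y::'i \<Rightarrow> real. y a)" by simp
      then show ?thesis
        by (metis UNIV_I continuous_on_def subset_UNIV tendsto_within_subset)
    qed
    have "((\<lambda>y. \<Sum>a\<in>F. K a * \<bar>y a - z a\<bar>) \<longlongrightarrow> (\<Sum>a\<in>F. K a * \<bar>z a - z a\<bar>)) (at z within ?Q)"
      by (intro tendsto_intros coord)
    then have "((\<lambda>y. \<Sum>a\<in>F. K a * \<bar>y a - z a\<bar>) \<longlongrightarrow> 0) (at z within ?Q)" by simp
    moreover have "\<forall>\<^sub>F y in at z within ?Q. norm (f y - f z) \<le> (\<Sum>a\<in>F. K a * \<bar>y a - z a\<bar>)"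
      using lip zQ by (auto simp: eventually_at_filter)
    ultimately have "((\<lambda>y. f y - f z) \<longlongrightarrow> 0) (at z within ?Q)"
      by (rule Lim_null_comparison[rotated])
    then show "(f \<longlongrightarrow> f z) (at z within ?Q)" by (rule LIM_zero_cancel)
  qed
qed

section \<open>Lattice points\<close>

lemma finite_int_box: "finite {k::int^'d. \<forall>m. \<bar>k $ m\<bar> \<le> c m}"
proof -
  have "{k::int^'d. \<forall>m. \<bar>k $ m\<bar> \<le> c m} \<subseteq> (\<lambda>f. \<chi> m. f m) ` PiE UNIV (\<lambda>m. {-c m..c m})"
  proof
    fix k :: "int^'d" assume "k \<in> {k. \<forall>m. \<bar>k $ m\<bar> \<le> c m}"
    then have "(\<lambda>m. k $ m) \<in> PiE UNIV (\<lambda>m. {-c m..c m})"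
      by (auto simp: PiE_iff abs_le_iff minus_le_iff)
    then show "k \<in> (\<lambda>f. \<chi> m. f m) ` PiE UNIV (\<lambda>m. {-c m..c m})"
      by (rule rev_image_eqI) simp
  qed
  then show ?thesis by (rule finite_subset) (intro finite_imageI finite_PiE; simp)
qed

lemma abs_le_l1norm: "\<bar>i $ m\<bar> \<le> l1norm i"
  unfolding l1norm_def by (rule member_le_sum) auto

lemma l1norm_nonneg: "0 \<le> l1norm i"
  unfolding l1norm_def by (simp add: sum_nonneg)

lemma l1norm_split: "l1norm i = \<bar>i $ k\<bar> + (\<Sum>m\<in>UNIV - {k}. \<bar>i $ m\<bar>)"
  unfolding l1norm_def by (simp add: sum.remove)

text \<open>Balls for the l1 norm are finite; this makes every local potential a
  function of finitely many coordinates.\<close>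
lemma finite_ball1: "finite (ball1 j r)"
proof -
  have "ball1 j r \<subseteq> (\<lambda>k. k + j) ` {k. \<forall>m. \<bar>k $ m\<bar> \<le> \<lceil>r\<rceil>}"
  proof
    fix k assume "k \<in> ball1 j r"
    then have "l1norm (k - j) \<le> \<lceil>r\<rceil>"
      by (simp add: ball1_def le_ceiling_iff)
    then have "\<forall>m. \<bar>(k - j) $ m\<bar> \<le> \<lceil>r\<rceil>"
      using abs_le_l1norm order_trans by blast
    then show "k \<in> (\<lambda>k. k + j) ` {k. \<forall>m. \<bar>k $ m\<bar> \<le> \<lceil>r\<rceil>}"
      by (intro image_eqI[of _ _ "k - j"]) auto
  qed
  then show ?thesis by (rule finite_subset[OF _ finite_imageI[OF finite_int_box]])
qed

text \<open>There are finitely many unit steps, so coercivity (C) can be applied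
  uniformly over all of them.\<close>
lemma finite_unit_steps: "finite {e::int^'d. l1norm e = 1}"
proof -
  have "{e::int^'d. l1norm e = 1} \<subseteq> {k. \<forall>m. \<bar>k $ m\<bar> \<le> 1}"
  proof
    fix e :: "int^'d" assume "e \<in> {e. l1norm e = 1}"
    then show "e \<in> {k. \<forall>m. \<bar>k $ m\<bar> \<le> 1}" using abs_le_l1norm[of e] by simp
  qed
  then show ?thesis using finite_int_box by (rule finite_subset)
qed

text \<open>The half-open parallelepiped spanned by the periods contains only
  finitely many lattice points, so Wpq is a finite sum.\<close>
lemma finite_Bp: "finite (Bp p)"
proof -
  have "Bp p \<subseteq> {k. \<forall>i. \<bar>k $ i\<bar> \<le> (\<Sum>j\<in>UNIV. \<bar>p j $ i\<bar>)}"
  proof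
    fix m assume "m \<in> Bp p"
    then obtain t :: "'a \<Rightarrow> real" where t01: "\<forall>j. 0 \<le> t j \<and> t j < 1"
      and m: "\<forall>i. real_of_int (m $ i) = (\<Sum>j\<in>UNIV. t j * real_of_int (p j $ i))"
      unfolding Bp_def by blast
    have "\<bar>m $ i\<bar> \<le> (\<Sum>j\<in>UNIV. \<bar>p j $ i\<bar>)" for i
    proof -
      have "\<bar>real_of_int (m $ i)\<bar> \<le> (\<Sum>j\<in>UNIV. \<bar>t j * real_of_int (p j $ i)\<bar>)"
        unfolding m[rule_format] by (rule sum_abs)
      also have "\<dots> \<le> (\<Sum>j\<in>UNIV. \<bar>real_of_int (p j $ i)\<bar>)"
      proof (intro sum_mono)
        fix j
        have "0 \<le> t j" "t j \<le> 1" using t01 by (auto simp: less_imp_le)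
        then show "\<bar>t j * real_of_int (p j $ i)\<bar> \<le> \<bar>real_of_int (p j $ i)\<bar>"
          by (simp add: abs_mult mult_left_le_one_le)
      qed
      finally show ?thesis
        by (simp only: of_int_abs[symmetric] of_int_sum[symmetric] of_int_le_iff)
    qed
    then show "m \<in> {k. \<forall>i. \<bar>k $ i\<bar> \<le> (\<Sum>j\<in>UNIV. \<bar>p j $ i\<bar>)}" by simp
  qed
  then show ?thesis using finite_int_box by (rule finite_subset)
qed

text \<open>If neighbouring values of y differ by at most R, then y grows at most
  linearly: walk from 0 to i along unit steps, reducing l1norm i by one each time.\<close>
lemma path_bound:
  fixes y :: "int^'d \<Rightarrow> real"
  assumes step: "\<And>j e. l1norm e = 1 \<Longrightarrow> \<bar>y (e + j) - y j\<bar> \<le> R"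
  shows "\<bar>y i - y 0\<bar> \<le> R * real_of_int (l1norm i)"
proof -
  have "nat (l1norm i) = n \<Longrightarrow> \<bar>y i - y 0\<bar> \<le> R * real_of_int (l1norm i)" for n
  proof (induction n arbitrary: i)
    case 0
    then have "l1norm i = 0" using l1norm_nonneg[of i] by simp
    then have "i = 0" using abs_le_l1norm[of i] by (simp add: vec_eq_iff)
    then show ?case by (simp add: l1norm_def)
  next
    case (Suc n)
    then have "i \<noteq> 0" by (auto simp: l1norm_def)
    then obtain k where k: "i $ k \<noteq> 0" by (auto simp: vec_eq_iff)
    define e where "e = axis k (sgn (i $ k))"
    have e1: "l1norm e = 1"
      unfolding l1norm_split[of e k] using k by (simp add: e_def axis_def abs_sgn)
    have "(\<Sum>m\<in>UNIV - {k}. \<bar>(i - e) $ m\<bar>) = (\<Sum>m\<in>UNIV - {k}. \<bar>i $ m\<bar>)"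
      by (rule sum.cong) (auto simp: e_def axis_def)
    moreover have "\<bar>i $ k - sgn (i $ k)\<bar> = \<bar>i $ k\<bar> - 1"
      using k by (cases "i $ k > 0") (auto simp: sgn_if)
    ultimately have ie: "l1norm (i - e) = l1norm i - 1"
      unfolding l1norm_split[of "i - e" k] l1norm_split[of i k] by (simp add: e_def axis_def)
    then have "\<bar>y (i - e) - y 0\<bar> \<le> R * real_of_int (l1norm i - 1)"
      using Suc by (metis diff_Suc_1 nat_diff_distrib' nat_one_as_int zero_le_one l1norm_nonneg)
    moreover have "\<bar>y i - y (i - e)\<bar> \<le> R"
      using step[OF e1, of "i - e"] by simp
    ultimately show ?case by (simp add: algebra_simps)
  qed
  then show ?thesis by blast
qed

section \<open>The period lattice\<close>

definition real_vec :: "int^'d \<Rightarrow> real^'d" where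
  "real_vec i = (\<chi> k. real_of_int (i $ k))"

lemma real_vec_add: "real_vec (a + b) = real_vec a + real_vec b"
  by (simp add: real_vec_def vec_eq_iff)

lemma lin_indep_cols_inj:
  assumes "lin_indep_cols p"
  shows "inj (\<lambda>j. real_vec (p j))"
proof
  fix a b assume ab: "real_vec (p a) = real_vec (p b)"
  show "a = b"
  proof (rule ccontr)
    assume "a \<noteq> b"
    define c where "c = (\<lambda>j. (if j = a then 1 else 0) - (if j = b then 1 else (0::real)))"
    have "(\<Sum>j\<in>UNIV. c j *\<^sub>R (\<chi> i. real_of_int (p j $ i))) = real_vec (p a) - real_vec (p b)"
      unfolding c_def real_vec_def
      by (simp add: scaleR_left_diff_distrib sum_subtractf if_distrib[of "\<lambda>t. t *\<^sub>R _"] sum.delta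
          cong: if_cong)
    then have "c a = 0" using assms ab unfolding lin_indep_cols_def by auto
    then show False using \<open>a \<noteq> b\<close> unfolding c_def by simp
  qed
qed

lemma lin_indep_cols_independent:
  assumes "lin_indep_cols p"
  shows "independent (range (\<lambda>j. real_vec (p j)))"
proof
  assume "dependent (range (\<lambda>j. real_vec (p j)))"
  then obtain u where u: "\<exists>v\<in>range (\<lambda>j. real_vec (p j)). u v \<noteq> 0"
    "(\<Sum>v\<in>range (\<lambda>j. real_vec (p j)). u v *\<^sub>R v) = 0"
    using dependent_finite[of "range (\<lambda>j. real_vec (p j))"] by auto
  have "(\<Sum>j\<in>UNIV. u (real_vec (p j)) *\<^sub>R (\<chi> i. real_of_int (p j $ i))) = 0"
    using u(2) sum.reindex[OF lin_indep_cols_inj[OF assms], of "\<lambda>v. u v *\<^sub>R v"]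
    by (simp add: real_vec_def)
  then have "\<forall>j. u (real_vec (p j)) = 0"
    using assms unfolding lin_indep_cols_def
    by (auto dest: spec[where x = "\<lambda>j. u (real_vec (p j))"])
  then show False using u(1) by auto
qed

text \<open>d independent vectors span R^d.\<close>
lemma lin_indep_cols_span:
  fixes p :: "'d \<Rightarrow> int^'d"
  assumes "lin_indep_cols p"
  shows "\<exists>t. w = (\<Sum>j\<in>UNIV. t j *\<^sub>R real_vec (p j))"
proof -
  let ?V = "range (\<lambda>j. real_vec (p j))"
  have "card ?V = CARD('d)"
    using card_image[OF lin_indep_cols_inj[OF assms]] by simp
  then have "(UNIV :: (real^'d) set) \<subseteq> span ?V"
    by (intro card_ge_dim_independent lin_indep_cols_independent[OF assms]) simp_all
  then obtain u where "w = (\<Sum>v\<in>?V. u v *\<^sub>R v)"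
    using span_finite[of ?V] by auto
  then have "w = (\<Sum>j\<in>UNIV. u (real_vec (p j)) *\<^sub>R real_vec (p j))"
    using sum.reindex[OF lin_indep_cols_inj[OF assms], of "\<lambda>v. u v *\<^sub>R v"] by simp
  then show ?thesis by (intro exI)
qed

text \<open>Bp p is a fundamental domain: every lattice site is a site of Bp p plus
  an integer combination of the periods (take integer parts of the real
  coordinates with respect to the basis p).\<close>
lemma lattice_decomposition:
  fixes p :: "'d \<Rightarrow> int^'d"
  assumes "lin_indep_cols p"
  shows "\<exists>b\<in>Bp p. \<exists>n::'d \<Rightarrow> int. i = b + (\<Sum>j\<in>UNIV. n j *s p j)"
proof -
  obtain t where t: "real_vec i = (\<Sum>j\<in>UNIV. t j *\<^sub>R real_vec (p j))"
    using lin_indep_cols_span[OF assms] by blast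
  have coord: "real_of_int (i $ k) = (\<Sum>j\<in>UNIV. t j * real_of_int (p j $ k))" for k
    using arg_cong[OF t, of "\<lambda>v. v $ k"] by (simp add: real_vec_def)
  define n where "n j = \<lfloor>t j\<rfloor>" for j
  define b where "b = i - (\<Sum>j\<in>UNIV. n j *s p j)"
  have "b \<in> Bp p"
    unfolding Bp_def
  proof (intro CollectI exI[of _ "\<lambda>j. t j - real_of_int (n j)"] conjI allI)
    fix j
    show "0 \<le> t j - real_of_int (n j)" "t j - real_of_int (n j) < 1"
      unfolding n_def by linarith+
  next
    fix k
    have "real_of_int (b $ k)
        = real_of_int (i $ k) - (\<Sum>j\<in>UNIV. real_of_int (n j) * real_of_int (p j $ k))"
      unfolding b_def by simp
    also have "\<dots> = (\<Sum>j\<in>UNIV. (t j - real_of_int (n j)) * real_of_int (p j $ k))"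
      unfolding coord by (simp add: left_diff_distrib sum_subtractf)
    finally show "real_of_int (b $ k) = (\<Sum>j\<in>UNIV. (t j - real_of_int (n j)) * real_of_int (p j $ k))" .
  qed
  moreover have "i = b + (\<Sum>j\<in>UNIV. n j *s p j)" unfolding b_def by simp
  ultimately show ?thesis by blast
qed

section \<open>Periodic configurations\<close>

text \<open>Periodic configurations exist: extend j \<mapsto> -q j linearly from the
  independent periods to R^d and restrict to the lattice.\<close>
lemma Xpq_nonempty:
  assumes "lin_indep_cols p"
  shows "\<exists>x. x \<in> Xpq p q"
proof -
  define v where "v j = real_vec (p j)" for j
  have injv: "inj v" unfolding v_def by (rule lin_indep_cols_inj[OF assms])
  obtain g where g: "linear g" "\<forall>w\<in>range v. g w = - real_of_int (q (inv v w))"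
    using linear_independent_extend[OF lin_indep_cols_independent[OF assms],
        of "\<lambda>w. - real_of_int (q (inv v w))"]
    unfolding v_def by blast
  have gv: "g (v j) = - real_of_int (q j)" for j using g(2) injv by simp
  define x where "x i = g (real_vec i)" for i
  have "tau (p j) (q j) x = x" for j
  proof
    fix i
    have "x (i + p j) = x i + g (v j)"
      unfolding x_def v_def real_vec_add by (rule linear_add[OF g(1)])
    then show "tau (p j) (q j) x i = x i" using gv[of j] unfolding tau_def by simp
  qed
  then show ?thesis unfolding Xpq_def by blast
qed

lemma Xpq_lattice_shift:
  assumes "x \<in> Xpq p q"
  shows "x (i + (\<Sum>j\<in>UNIV. n j *s p j)) = x i - real_of_int (\<Sum>j\<in>UNIV. n j * q j)"
proof -
  define P where "P v c \<longleftrightarrow> (\<forall>i. x (i + v) = x i - real_of_int c)" for v c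
  have base: "P (p j) (q j)" for j
  proof -
    have "tau (p j) (q j) x = x" using assms unfolding Xpq_def by blast
    then show ?thesis unfolding P_def tau_def by (metis add_diff_cancel_right')
  qed
  have Padd: "P v1 c1 \<Longrightarrow> P v2 c2 \<Longrightarrow> P (v1 + v2) (c1 + c2)" for v1 c1 v2 c2
    unfolding P_def by (metis add.assoc diff_diff_eq of_int_add)
  have Pneg: "P (- v) (- c)" if "P v c" for v c
    unfolding P_def
  proof
    fix i
    show "x (i + - v) = x i - real_of_int (- c)"
      using that[unfolded P_def, rule_format, of "i - v"] by simp
  qed
  have Pmult: "P (m *s p j) (m * q j)" for m :: int and j
  proof (induction m rule: int_induct[where k = 0])
    case base
    then show ?case by (simp add: P_def vec_eq_iff)
  next
    case (step1 m)
    have "(m + 1) *s p j = m *s p j + p j" by (simp add: vec_eq_iff algebra_simps)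
    then show ?case using Padd[OF step1(2) base] by (simp add: algebra_simps)
  next
    case (step2 m)
    have "(m - 1) *s p j = m *s p j + - p j" by (simp add: vec_eq_iff algebra_simps)
    then show ?case using Padd[OF step2(2) Pneg[OF base]] by (simp add: algebra_simps)
  qed
  have "P (\<Sum>j\<in>A. n j *s p j) (\<Sum>j\<in>A. n j * q j)" if "finite A" for A
    using that
  proof (induction A rule: finite_induct)
    case empty
    then show ?case by (simp add: P_def)
  next
    case (insert a A)
    then show ?case using Padd[OF Pmult insert.IH] by simp
  qed
  then show ?thesis unfolding P_def by simp
qed

lemma Xpq_add_const:
  assumes "x \<in> Xpq p q"
  shows "(\<lambda>i. x i + real_of_int l) \<in> Xpq p q"
  using assms unfolding Xpq_def tau_def by (simp add: fun_eq_iff)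

lemma closed_Xpq: "closed (Xpq p q)"
proof -
  have "Xpq p q = {x. \<forall>j i. x (i + p j) + real_of_int (q j) = x i}"
    unfolding Xpq_def tau_def by (auto simp: fun_eq_iff)
  also have "closed \<dots>"
    by (intro closed_Collect_all closed_Collect_eq continuous_intros) simp_all
  finally show ?thesis .
qed

section \<open>Consequences of the axioms on the local potentials\<close>

lemma local_potentials_locality:
  assumes "local_potentials S"
  obtains r where "\<And>j x y. (\<forall>k\<in>ball1 j r. x k = y k) \<Longrightarrow> S j x = S j y"
  using assms[unfolded local_potentials_def, THEN conjunct1] by blast

lemma local_potentials_C2:
  assumes "local_potentials S"
  shows "C2 (S j)"
  using assms[unfolded local_potentials_def, THEN conjunct1] by blast

lemma local_potentials_shift:
  assumes "local_potentials S"
  shows "S j (tau k l x) = S (j + k) x"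
  using assms[unfolded local_potentials_def, THEN conjunct2, THEN conjunct1] by blast

lemma local_potentials_bdd_below:
  assumes "local_potentials S"
  shows "bdd_below (range (S j))"
  using assms[unfolded local_potentials_def, THEN conjunct2, THEN conjunct2, THEN conjunct1]
  by simp

lemma local_potentials_coercive:
  assumes "local_potentials S" "l1norm (k - j) = 1"
  shows "\<exists>R. \<forall>x. \<bar>x k - x j\<bar> > R \<longrightarrow> S j x > M"
  using assms(1)[unfolded local_potentials_def, THEN conjunct2, THEN conjunct2, THEN conjunct2,
      THEN conjunct1] assms(2)
  by blast

text \<open>By translation invariance (B) the lower bounds in (C) are uniform in j.\<close>
lemma local_potentials_uniform_lower_bound:
  assumes "local_potentials S"
  obtains c0 where "\<And>j x. c0 \<le> S j x"
proof -
  obtain c0 where c0: "\<And>y. c0 \<le> S 0 y"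
    using local_potentials_bdd_below[OF assms] unfolding bdd_below_def by auto
  have "c0 \<le> S j x" for j x
    using c0[of "tau j 0 x"] local_potentials_shift[OF assms, of 0 j 0 x] by simp
  then show ?thesis by (rule that)
qed

text \<open>W is a finite sum of C^2 functions of finitely many variables.\<close>
lemma continuous_on_Wpq:
  assumes "local_potentials S"
  shows "continuous_on (config_box c) (Wpq S p)"
proof -
  obtain r where loc: "\<And>j x y. (\<forall>k\<in>ball1 j r. x k = y k) \<Longrightarrow> S j x = S j y"
    using local_potentials_locality[OF assms] by blast
  have "continuous_on (config_box c) (\<lambda>x. \<Sum>j\<in>Bp p. S j x)"
    using continuous_on_box_local_C2[OF finite_ball1 loc local_potentials_C2[OF assms]]
    by (intro continuous_on_sum) blast
  then show ?thesis unfolding Wpq_def[abs_def] .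
qed

lemma Wpq_add_const:
  assumes "local_potentials S"
  shows "Wpq S p (\<lambda>i. x i + real_of_int l) = Wpq S p x"
proof -
  have "(\<lambda>i. x i + real_of_int l) = tau 0 l x" unfolding tau_def by simp
  then show ?thesis
    unfolding Wpq_def using local_potentials_shift[OF assms, of _ 0 l x] by simp
qed

lemma potential_in_fundamental_domain:
  assumes "local_potentials S" "lin_indep_cols p" "x \<in> Xpq p q"
  shows "\<exists>b\<in>Bp p. S j x = S b x"
proof -
  obtain b n where b: "b \<in> Bp p" and j: "j = b + (\<Sum>k\<in>UNIV. n k *s p k)"
    using lattice_decomposition[OF assms(2)] by blast
  define v where "v = (\<Sum>k\<in>UNIV. n k *s p k)"
  define c where "c = (\<Sum>k\<in>UNIV. n k * q k)"
  have "tau v c x = x"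
    unfolding tau_def v_def c_def using Xpq_lattice_shift[OF assms(3)] by (simp add: fun_eq_iff)
  moreover have "S j x = S b (tau v c x)"
    using local_potentials_shift[OF assms(1), of b v c x] j unfolding v_def by simp
  ultimately have "S j x = S b x" by simp
  then show ?thesis using b by blast
qed

text \<open>Each single potential is controlled by the periodic action: the other
  terms of the sum defining W are bounded below.\<close>
lemma potential_le_Wpq:
  assumes "local_potentials S" "lin_indep_cols p"
  obtains K where "\<And>x j. x \<in> Xpq p q \<Longrightarrow> S j x \<le> Wpq S p x + K"
proof -
  obtain c0 where c0: "\<And>j x. c0 \<le> S j x"
    using local_potentials_uniform_lower_bound[OF assms(1)] by blast
  define K where "K = real (card (Bp p)) * \<bar>c0\<bar>"
  have "S j x \<le> Wpq S p x + K" if x: "x \<in> Xpq p q" for x j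
  proof -
    obtain b where b: "b \<in> Bp p" and Sj: "S j x = S b x"
      using potential_in_fundamental_domain[OF assms x] by blast
    have "Wpq S p x = S b x + (\<Sum>i\<in>Bp p - {b}. S i x)"
      unfolding Wpq_def by (rule sum.remove[OF finite_Bp b])
    moreover have "real (card (Bp p - {b})) * c0 \<le> (\<Sum>i\<in>Bp p - {b}. S i x)"
      using c0 by (rule sum_bounded_below)
    moreover have "- K \<le> real (card (Bp p - {b})) * c0"
    proof -
      have "real (card (Bp p - {b})) * \<bar>c0\<bar> \<le> K"
        unfolding K_def by (intro mult_right_mono) (auto simp: card_Diff1_le finite_Bp)
      moreover have "- (real (card (Bp p - {b})) * \<bar>c0\<bar>) \<le> real (card (Bp p - {b})) * c0"
        using mult_left_mono[of "- \<bar>c0\<bar>" c0 "real (card (Bp p - {b}))"] by simp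
      ultimately show ?thesis by linarith
    qed
    ultimately show ?thesis using Sj by linarith
  qed
  then show ?thesis by (rule that)
qed

text \<open>On a sublevel set of W, coercivity (C) bounds the differences between
  neighbouring values uniformly.\<close>
lemma neighbour_bound:
  assumes "local_potentials S" "lin_indep_cols p"
  obtains R where "\<And>x j e. x \<in> Xpq p q \<Longrightarrow> Wpq S p x \<le> M \<Longrightarrow> l1norm e = 1 \<Longrightarrow>
    \<bar>x (e + j) - x j\<bar> \<le> R"
proof -
  obtain K where K: "\<And>x j. x \<in> Xpq p q \<Longrightarrow> S j x \<le> Wpq S p x + K"
    using potential_le_Wpq[OF assms] by blast
  have "\<forall>e. \<exists>R. l1norm e = 1 \<longrightarrow> (\<forall>x. \<bar>x e - x 0\<bar> > R \<longrightarrow> S 0 x > M + K)"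
    using local_potentials_coercive[OF assms(1), of _ 0] by auto
  then obtain Rf where Rf: "\<And>e x. l1norm e = 1 \<Longrightarrow> \<bar>x e - x 0\<bar> > Rf e \<Longrightarrow> S 0 x > M + K"
    by metis
  define R where "R = (\<Sum>e\<in>{e. l1norm e = 1}. \<bar>Rf e\<bar>)"
  have "\<bar>x (e + j) - x j\<bar> \<le> R"
    if x: "x \<in> Xpq p q" "Wpq S p x \<le> M" and e: "l1norm e = 1" for x j e
  proof -
    have "S 0 (tau j 0 x) \<le> M + K"
      using K[OF x(1), of j] x(2) local_potentials_shift[OF assms(1), of 0 j 0 x] by simp
    then have "\<not> \<bar>tau j 0 x e - tau j 0 x 0\<bar> > Rf e"
      using Rf[OF e, of "tau j 0 x"] by linarith
    then have "\<bar>x (e + j) - x j\<bar> \<le> Rf e" unfolding tau_def by simp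
    also have "\<dots> \<le> \<bar>Rf e\<bar>" by simp
    also have "\<dots> \<le> R"
      unfolding R_def using e finite_unit_steps by (intro member_le_sum) auto
    finally show ?thesis .
  qed
  then show ?thesis by (rule that)
qed

section \<open>The normalised sublevel set\<close>

definition normalized_sublevel ::
  "(int^'d \<Rightarrow> (int^'d \<Rightarrow> real) \<Rightarrow> real) \<Rightarrow> ('d \<Rightarrow> int^'d) \<Rightarrow> ('d \<Rightarrow> int) \<Rightarrow> real \<Rightarrow>
   (int^'d \<Rightarrow> real) set" where
  "normalized_sublevel S p q M = {x \<in> Xpq p q. 0 \<le> x 0 \<and> x 0 \<le> 1 \<and> Wpq S p x \<le> M}"

definition normalize_config :: "(int^'d \<Rightarrow> real) \<Rightarrow> (int^'d \<Rightarrow> real)" where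
  "normalize_config x = (\<lambda>i. x i + real_of_int (- \<lfloor>x 0\<rfloor>))"

lemma normalize_in_sublevel:
  assumes "local_potentials S" "x \<in> Xpq p q" "Wpq S p x \<le> M"
  shows "normalize_config x \<in> normalized_sublevel S p q M" and "Wpq S p (normalize_config x) = Wpq S p x"
proof -
  show W: "Wpq S p (normalize_config x) = Wpq S p x"
    unfolding normalize_config_def by (rule Wpq_add_const[OF assms(1)])
  have "normalize_config x \<in> Xpq p q"
    unfolding normalize_config_def by (rule Xpq_add_const[OF assms(2)])
  moreover have "0 \<le> normalize_config x 0 \<and> normalize_config x 0 \<le> 1"
    unfolding normalize_config_def by simp linarith
  ultimately show "normalize_config x \<in> normalized_sublevel S p q M"
    unfolding normalized_sublevel_def using W assms(3) by simp
qed

text \<open>The normalised sublevel set lies in a box: |x i| \<le> 1 + R * l1norm i.\<close>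
lemma normalized_sublevel_in_box:
  assumes "local_potentials S" "lin_indep_cols p"
  obtains c where "normalized_sublevel S p q M \<subseteq> config_box c"
proof -
  obtain R where R: "\<And>x j e. x \<in> Xpq p q \<Longrightarrow> Wpq S p x \<le> M \<Longrightarrow> l1norm e = 1 \<Longrightarrow>
      \<bar>x (e + j) - x j\<bar> \<le> R"
    using neighbour_bound[OF assms] by blast
  have "normalized_sublevel S p q M \<subseteq> config_box (\<lambda>i. 1 + R * real_of_int (l1norm i))"
  proof
    fix x assume "x \<in> normalized_sublevel S p q M"
    then have x: "x \<in> Xpq p q" "Wpq S p x \<le> M" "0 \<le> x 0" "x 0 \<le> 1"
      unfolding normalized_sublevel_def by auto
    have "\<bar>x i\<bar> \<le> 1 + R * real_of_int (l1norm i)" for i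
      using path_bound[OF R[OF x(1,2)], of i] x(3,4) unfolding abs_le_iff by linarith
    then show "x \<in> config_box (\<lambda>i. 1 + R * real_of_int (l1norm i))"
      by (simp add: config_box_def)
  qed
  then show ?thesis by (rule that)
qed

text \<open>A closed subset of a box on which W is continuous, hence compact.\<close>
lemma compact_normalized_sublevel:
  assumes "local_potentials S"
    and box: "normalized_sublevel S p q M \<subseteq> config_box c"
  shows "compact (normalized_sublevel S p q M)"
proof -
  let ?K = "normalized_sublevel S p q M"
  have "closed (config_box c \<inter> Wpq S p -` {..M})"
    by (intro continuous_closed_preimage continuous_on_Wpq[OF assms(1)]
        compact_imp_closed[OF compact_config_box]) simp
  moreover have "closed {x::int^'d \<Rightarrow> real. 0 \<le> x 0 \<and> x 0 \<le> 1}"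
    by (intro closed_Collect_conj closed_Collect_le continuous_intros) simp_all
  ultimately have "closed ((config_box c \<inter> Wpq S p -` {..M}) \<inter> (Xpq p q \<inter> {x. 0 \<le> x 0 \<and> x 0 \<le> 1}))"
    by (rule closed_Int[OF _ closed_Int[OF closed_Xpq]])
  moreover have "?K = (config_box c \<inter> Wpq S p -` {..M}) \<inter> (Xpq p q \<inter> {x. 0 \<le> x 0 \<and> x 0 \<le> 1})"
    using box unfolding normalized_sublevel_def by auto
  ultimately have "compact (config_box c \<inter> ?K)"
    using compact_config_box by (intro compact_Int_closed) simp_all
  moreover have "config_box c \<inter> ?K = ?K" using box by blast
  ultimately show ?thesis by simp
qed

theorem mainTheorem3:
  fixes S :: "int^'d \<Rightarrow> (int^'d \<Rightarrow> real) \<Rightarrow> real"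
    and p :: "'d \<Rightarrow> int^'d"
    and q :: "'d \<Rightarrow> int"
  assumes "local_potentials S"
    and "lin_indep_cols p"
  shows "\<exists>x\<in>Xpq p q. \<forall>y\<in>Xpq p q. Wpq S p x \<le> Wpq S p y"
proof -
  obtain x0 where x0: "x0 \<in> Xpq p q" using Xpq_nonempty[OF assms(2)] by blast
  define K where "K = normalized_sublevel S p q (Wpq S p x0)"
  obtain c where box: "K \<subseteq> config_box c"
    using normalized_sublevel_in_box[OF assms] unfolding K_def by blast
  have x0K: "normalize_config x0 \<in> K" and W_x0: "Wpq S p (normalize_config x0) = Wpq S p x0"
    using normalize_in_sublevel[OF assms(1) x0 order_refl] unfolding K_def by auto
  obtain x where xK: "x \<in> K" and min: "\<And>y. y \<in> K \<Longrightarrow> Wpq S p x \<le> Wpq S p y"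
    using continuous_attains_inf[OF compact_normalized_sublevel[OF assms(1) box[unfolded K_def]]]
      continuous_on_subset[OF continuous_on_Wpq[OF assms(1)] box] x0K
    unfolding K_def by blast
  have "Wpq S p x \<le> Wpq S p y" if y: "y \<in> Xpq p q" for y
  proof (cases "Wpq S p y \<le> Wpq S p x0")
    case True
    then show ?thesis
      using min normalize_in_sublevel[OF assms(1) y True] unfolding K_def by fastforce
  next
    case False
    then show ?thesis using min[OF x0K] W_x0 by linarith
  qed
  then show ?thesis using xK unfolding K_def normalized_sublevel_def by blast
qed

end
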